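(* For every integer $k\ge 3$, $$F_v(J_k,J_k;k)\le\left\lceil\frac{5F_v(k-1,k-1;k)}{2}\right\rceil.$$
   Context: All graphs are finite and simple. $J_n$ denotes $K_n$ with one edge removed. An integer $a$ used in place of a graph denotes $K_a$. "A graph $F$ contains $H$" means $F$ has a (not necessarily induced) subgraph isomorphic to $H$. $G\rightarrow(H_1,H_2)^v$ means: for every partition $V(G)=X_1\cup X_2$ there is $i$ such that the subgraph induced by $X_i$ contains $H_i$. $F_v(H_1,H_2;k)$ is the minimum number of vertices of a $K_k$-free graph $G$ with $G\rightarrow(H_1,H_2)^v$. *)

theory Defs
  imports Complex_Main
begin

type_synonym graph = "nat set \<times> (nat \<Rightarrow> nat \<Rightarrow> bool)"

definition verts :: "graph \<Rightarrow> nat set" where "verts G = fst G"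
definition adj :: "graph \<Rightarrow> nat \<Rightarrow> nat \<Rightarrow> bool" where "adj G = snd G"

definition simple_graph :: "graph \<Rightarrow> bool" where
  "simple_graph G \<longleftrightarrow> finite (verts G) \<and>
     (\<forall>x y. adj G x y \<longrightarrow> x \<in> verts G \<and> y \<in> verts G \<and> x \<noteq> y) \<and>
     (\<forall>x y. adj G x y \<longrightarrow> adj G y x)"

definition contains :: "graph \<Rightarrow> graph \<Rightarrow> bool" where
  "contains F H \<longleftrightarrow> (\<exists>f. inj_on f (verts H) \<and> f ` verts H \<subseteq> verts F \<and>
     (\<forall>x\<in>verts H. \<forall>y\<in>verts H. adj H x y \<longrightarrow> adj F (f x) (f y)))"

definition induced :: "graph \<Rightarrow> nat set \<Rightarrow> graph" where
  "induced G X = (verts G \<inter> X, \<lambda>x y. adj G x y \<and> x \<in> X \<and> y \<in> X)"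

definition Kg :: "nat \<Rightarrow> graph" where
  "Kg a = ({0..<a}, \<lambda>x y. x < a \<and> y < a \<and> x \<noteq> y)"

definition Jg :: "nat \<Rightarrow> graph" where
  "Jg n = ({0..<n}, \<lambda>x y. x < n \<and> y < n \<and> x \<noteq> y \<and> {x, y} \<noteq> {0, 1})"

definition vertex_arrows :: "graph \<Rightarrow> graph \<Rightarrow> graph \<Rightarrow> bool" where
  "vertex_arrows G H1 H2 \<longleftrightarrow> (\<forall>X1 X2. X1 \<union> X2 = verts G \<and> X1 \<inter> X2 = {} \<longrightarrow>
     contains (induced G X1) H1 \<or> contains (induced G X2) H2)"

definition Fv :: "graph \<Rightarrow> graph \<Rightarrow> nat \<Rightarrow> nat" where
  "Fv H1 H2 k = (LEAST n. \<exists>G. simple_graph G \<and> card (verts G) = n \<and>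
     \<not> contains G (Kg k) \<and> vertex_arrows G H1 H2)"

end

theory Submission
  imports Defs "HOL-Library.Nat_Bijection" "HOL-Combinatorics.Transposition"
begin

text \<open>Take a smallest K_k-free graph G with G \<rightarrow> (K_(k-1), K_(k-1))^v and a vertex v. By
minimality, G - v splits into two K_(k-1)-free classes; let B be the larger one, so
2|B| \<ge> |G| - 1. Replace every vertex of B by 2 and every other vertex by 3 independent
copies. The blow-up is still K_k-free and has at most (5|G| + 1)/2 vertices. Given a
2-colouring of it, colour each vertex of G by the majority colour of its copies; some
class then contains a K_(k-1) of G, which cannot lie inside B, and a vertex outside B
has two copies of its colour. These two non-adjacent copies together with one copy of
each other clique vertex form a J_k.\<close>

lemma verts_induced [simp]: "verts (induced G X) = verts G \<inter> X"
  by (simp add: induced_def verts_def)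

lemma adj_induced [simp]: "adj (induced G X) x y \<longleftrightarrow> adj G x y \<and> x \<in> X \<and> y \<in> X"
  by (simp add: induced_def adj_def)

lemma verts_Kg [simp]: "verts (Kg a) = {0..<a}"
  by (simp add: Kg_def verts_def)

lemma adj_Kg [simp]: "adj (Kg a) x y \<longleftrightarrow> x < a \<and> y < a \<and> x \<noteq> y"
  by (simp add: Kg_def adj_def)

lemma verts_Jg [simp]: "verts (Jg a) = {0..<a}"
  by (simp add: Jg_def verts_def)

lemma adj_Jg [simp]: "adj (Jg a) x y \<longleftrightarrow> x < a \<and> y < a \<and> x \<noteq> y \<and> {x, y} \<noteq> {0, 1}"
  by (simp add: Jg_def adj_def)

lemma induced_induced: "X \<subseteq> W \<Longrightarrow> induced (induced G W) X = induced G X"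
  by (auto simp: induced_def[of "induced G W"] induced_def verts_def adj_def fun_eq_iff)

lemma simple_graph_induced: "simple_graph G \<Longrightarrow> simple_graph (induced G X)"
  unfolding simple_graph_def by auto

lemma contains_trans:
  assumes "contains F H" "contains H H'"
  shows "contains F H'"
proof -
  obtain f where f: "inj_on f (verts H)" "f ` verts H \<subseteq> verts F"
    "\<forall>x\<in>verts H. \<forall>y\<in>verts H. adj H x y \<longrightarrow> adj F (f x) (f y)"
    using assms(1) unfolding contains_def by blast
  obtain g where g: "inj_on g (verts H')" "g ` verts H' \<subseteq> verts H"
    "\<forall>x\<in>verts H'. \<forall>y\<in>verts H'. adj H' x y \<longrightarrow> adj H (g x) (g y)"
    using assms(2) unfolding contains_def by blast
  have "inj_on (f \<circ> g) (verts H')"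
    using g(1) inj_on_subset[OF f(1) g(2)] by (rule comp_inj_on)
  with f g show ?thesis
    unfolding contains_def by (intro exI[of _ "f \<circ> g"]) (auto simp: image_subset_iff)
qed

lemma contains_induced_imp_contains: "contains (induced G X) H \<Longrightarrow> contains G H"
  unfolding contains_def by auto

lemma not_contains_if_empty: "verts F = {} \<Longrightarrow> verts H \<noteq> {} \<Longrightarrow> \<not> contains F H"
  unfolding contains_def by auto

lemma Jg_Suc_contains_Kg: "contains (Jg (Suc n)) (Kg n)"
  unfolding contains_def
  by (intro exI[of _ Suc]) (auto simp: doubleton_eq_iff)

lemma vertex_arrows_mono:
  assumes "vertex_arrows G H1 H2" "contains H1 H1'" "contains H2 H2'"
  shows "vertex_arrows G H1' H2'"
  using assms contains_trans unfolding vertex_arrows_def by blast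

text \<open>Vertices are natural numbers, so copy i of a vertex v is encoded as prod_encode (v, i).\<close>

definition blowup_verts :: "graph \<Rightarrow> (nat \<Rightarrow> nat) \<Rightarrow> nat set" where
  "blowup_verts G m = prod_encode ` (SIGMA v:verts G. {..<m v})"

definition origin :: "nat \<Rightarrow> nat" where
  "origin x = fst (prod_decode x)"

definition blowup :: "graph \<Rightarrow> (nat \<Rightarrow> nat) \<Rightarrow> graph" where
  "blowup G m = (blowup_verts G m,
     \<lambda>x y. x \<in> blowup_verts G m \<and> y \<in> blowup_verts G m \<and> adj G (origin x) (origin y))"

definition copies :: "graph \<Rightarrow> (nat \<Rightarrow> nat) \<Rightarrow> nat \<Rightarrow> nat set" where
  "copies G m v = {x \<in> blowup_verts G m. origin x = v}"

lemma verts_blowup [simp]: "verts (blowup G m) = blowup_verts G m"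
  by (simp add: blowup_def verts_def)

lemma adj_blowup [simp]:
  "adj (blowup G m) x y \<longleftrightarrow>
     x \<in> blowup_verts G m \<and> y \<in> blowup_verts G m \<and> adj G (origin x) (origin y)"
  by (simp add: blowup_def adj_def)

lemma origin_mem_verts: "x \<in> blowup_verts G m \<Longrightarrow> origin x \<in> verts G"
  by (auto simp: blowup_verts_def origin_def)

lemma finite_blowup_verts: "finite (verts G) \<Longrightarrow> finite (blowup_verts G m)"
  by (simp add: blowup_verts_def)

lemma card_blowup_verts:
  "finite (verts G) \<Longrightarrow> card (blowup_verts G m) = (\<Sum>v\<in>verts G. m v)"
  unfolding blowup_verts_def by (simp add: card_image inj_prod_encode card_SigmaI)

lemma copies_eq: "v \<in> verts G \<Longrightarrow> copies G m v = prod_encode ` ({v} \<times> {..<m v})"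
  by (auto simp: copies_def blowup_verts_def origin_def)

lemma copies_subset: "copies G m v \<subseteq> blowup_verts G m"
  by (simp add: copies_def)

lemma card_copies: "v \<in> verts G \<Longrightarrow> card (copies G m v) = m v"
  by (simp add: copies_eq card_image inj_prod_encode)

lemma finite_copies: "finite (copies G m v)"
proof (cases "v \<in> verts G")
  case False
  then have "copies G m v = {}" by (auto simp: copies_def dest: origin_mem_verts)
  then show ?thesis by simp
qed (simp add: copies_eq)

lemma simple_graph_blowup: "simple_graph G \<Longrightarrow> simple_graph (blowup G m)"
  unfolding simple_graph_def by (auto simp: finite_blowup_verts)

lemma contains_Kg_blowupD:
  assumes "simple_graph G" "contains (blowup G m) (Kg k)"
  shows "contains G (Kg k)"
proof -
  obtain f where f: "inj_on f {0..<k}" "f ` {0..<k} \<subseteq> blowup_verts G m"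
    "\<forall>x<k. \<forall>y<k. x \<noteq> y \<longrightarrow> adj G (origin (f x)) (origin (f y))"
    using assms(2) unfolding contains_def by auto
  have "inj_on (origin \<circ> f) {0..<k}"
  proof (rule inj_onI, rule ccontr)
    fix x y assume "x \<in> {0..<k}" "y \<in> {0..<k}" "(origin \<circ> f) x = (origin \<circ> f) y" "x \<noteq> y"
    with f(3) assms(1) show False unfolding simple_graph_def by fastforce
  qed
  with f show ?thesis
    unfolding contains_def by (intro exI[of _ "origin \<circ> f"]) (auto dest: origin_mem_verts)
qed

lemma clique_with_first_vertex_outside:
  assumes "contains (induced G T) (Kg n)" "\<not> contains (induced G B) (Kg n)"
  obtains f where "inj_on f {0..<n}" "f ` {0..<n} \<subseteq> verts G \<inter> T"
    "\<forall>i<n. \<forall>j<n. i \<noteq> j \<longrightarrow> adj G (f i) (f j)" "f 0 \<notin> B"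
proof -
  obtain f where f: "inj_on f {0..<n}" "f ` {0..<n} \<subseteq> verts G \<inter> T"
    "\<forall>i<n. \<forall>j<n. i \<noteq> j \<longrightarrow> adj G (f i) (f j)"
    using assms(1) unfolding contains_def by auto
  have "\<exists>j<n. f j \<notin> B"
  proof (rule ccontr)
    assume "\<not> (\<exists>j<n. f j \<notin> B)"
    then have "f ` {0..<n} \<subseteq> B" by auto
    with f have "contains (induced G B) (Kg n)"
      unfolding contains_def by (intro exI[of _ f]) auto
    with assms(2) show False ..
  qed
  then obtain j where j: "j < n" "f j \<notin> B"
    by auto
  let ?g = "f \<circ> transpose 0 j"
  have perm: "transpose 0 j ` {0..<n} = {0..<n}"
    using j(1) by simp
  have "inj_on ?g {0..<n}"
    using f(1) perm by (simp add: comp_inj_on)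
  moreover have "?g ` {0..<n} \<subseteq> verts G \<inter> T"
    using f(2) perm by (simp only: image_comp[symmetric])
  moreover have "\<forall>i<n. \<forall>i'<n. i \<noteq> i' \<longrightarrow> adj G (?g i) (?g i')"
    using f(3) j(1) by (auto simp: transpose_def)
  ultimately show thesis
    using that j(2) by simp
qed

lemma contains_Jg_Suc_in_blowup:
  assumes inj: "inj_on f {0..<n}"
    and clique: "\<forall>i<n. \<forall>j<n. i \<noteq> j \<longrightarrow> adj G (f i) (f j)"
    and one: "\<forall>i<n. S \<inter> copies G m (f i) \<noteq> {}"
    and two: "2 \<le> card (S \<inter> copies G m (f 0))"
  shows "contains (induced (blowup G m) S) (Jg (Suc n))"
proof -
  obtain x0 x1 where x: "x0 \<in> S \<inter> copies G m (f 0)" "x1 \<in> S \<inter> copies G m (f 0)" "x0 \<noteq> x1"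
    using two by (auto simp: numeral_2_eq_2 card_le_Suc_iff)
  define r where "r i = (SOME x. x \<in> S \<inter> copies G m (f i))" for i
  define g where "g i = (if i = 0 then x0 else if i = 1 then x1 else r (i - 1))" for i
  \<comment> \<open>as i - 1 truncates, vertices 0 and 1, the non-adjacent pair of J, both lie over f 0\<close>
  have g: "g i \<in> S \<inter> copies G m (f (i - 1))" if "i < Suc n" for i
  proof (cases "i \<le> 1")
    case True
    with x show ?thesis
      by (cases "i = 0") (auto simp: g_def)
  next
    case False
    then have "g i = r (i - 1)" "i - 1 < n"
      using that by (auto simp: g_def)
    moreover have "\<exists>x. x \<in> S \<inter> copies G m (f (i - 1))"
      using one \<open>i - 1 < n\<close> by blast
    ultimately show ?thesis
      unfolding r_def by (metis someI_ex)
  qed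
  have origin_g: "g i \<in> S \<and> g i \<in> blowup_verts G m \<and> origin (g i) = f (i - 1)" if "i < Suc n" for i
    using g[OF that] by (auto simp: copies_def)
  have apart: "f (a - 1) \<noteq> f (b - 1)"
    if "a < Suc n" "b < Suc n" "a \<noteq> b" "{a, b} \<noteq> {0, 1}" for a b
  proof -
    have "a - 1 \<noteq> b - 1"
      using that by (auto simp: doubleton_eq_iff)
    with that inj show ?thesis
      by (auto dest: inj_onD)
  qed
  have "inj_on g {0..<Suc n}"
  proof (rule inj_onI, rule ccontr)
    fix a b assume ab: "a \<in> {0..<Suc n}" "b \<in> {0..<Suc n}" "g a = g b" "a \<noteq> b"
    show False
    proof (cases "{a, b} = {0, 1}")
      case True
      with ab x(3) show False by (auto simp: g_def doubleton_eq_iff)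
    next
      case False
      with ab apart[of a b] origin_g[of a] origin_g[of b] show False by auto
    qed
  qed
  moreover have "\<forall>a<Suc n. \<forall>b<Suc n. adj (Jg (Suc n)) a b \<longrightarrow> adj (induced (blowup G m) S) (g a) (g b)"
  proof (intro allI impI)
    fix a b assume "a < Suc n" "b < Suc n" "adj (Jg (Suc n)) a b"
    moreover from this have "f (a - 1) \<noteq> f (b - 1)" "a - 1 < n" "b - 1 < n"
      using apart[of a b] by auto
    moreover from this have "adj G (f (a - 1)) (f (b - 1))"
      using clique by metis
    ultimately show "adj (induced (blowup G m) S) (g a) (g b)"
      using origin_g[of a] origin_g[of b] by auto
  qed
  ultimately show ?thesis
    unfolding contains_def using origin_g by (intro exI[of _ g]) auto
qed

lemma contains_Jg_Suc_in_blowup_if_doubled_outside: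
  assumes "contains (induced G T) (Kg n)" "\<not> contains (induced G B) (Kg n)"
    and "\<forall>v\<in>verts G \<inter> T. 1 \<le> card (S \<inter> copies G m v)"
    and "\<forall>v\<in>verts G \<inter> T - B. 2 \<le> card (S \<inter> copies G m v)"
  shows "contains (induced (blowup G m) S) (Jg (Suc n))"
proof -
  obtain f where f: "inj_on f {0..<n}" "f ` {0..<n} \<subseteq> verts G \<inter> T"
    "\<forall>i<n. \<forall>j<n. i \<noteq> j \<longrightarrow> adj G (f i) (f j)" "f 0 \<notin> B"
    using assms(1,2) by (rule clique_with_first_vertex_outside)
  have "n \<noteq> 0"
  proof
    assume "n = 0"
    with assms(2) show False by (simp add: contains_def)
  qed
  then have "f 0 \<in> verts G \<inter> T - B"
    using f(2,4) by auto
  moreover have "\<forall>i<n. S \<inter> copies G m (f i) \<noteq> {}"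
    using assms(3) f(2) by (force simp: card_gt_0_iff Suc_le_eq)
  ultimately show ?thesis
    using f(1,3) assms(4) by (intro contains_Jg_Suc_in_blowup) auto
qed

lemma vertex_arrows_blowup:
  assumes arrows: "vertex_arrows G (Kg n) (Kg n)" and free: "\<not> contains (induced G B) (Kg n)"
    and pos: "\<forall>v\<in>verts G. 1 \<le> m v" and triple: "\<forall>v\<in>verts G - B. 3 \<le> m v"
  shows "vertex_arrows (blowup G m) (Jg (Suc n)) (Jg (Suc n))"
  unfolding vertex_arrows_def
proof (intro allI impI)
  fix X1 X2 assume X: "X1 \<union> X2 = verts (blowup G m) \<and> X1 \<inter> X2 = {}"
  let ?c1 = "\<lambda>v. card (X1 \<inter> copies G m v)" and ?c2 = "\<lambda>v. card (X2 \<inter> copies G m v)"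
  have split: "?c1 v + ?c2 v = m v" if "v \<in> verts G" for v
  proof -
    have "(X1 \<inter> copies G m v) \<union> (X2 \<inter> copies G m v) = copies G m v"
      using X copies_subset[of G m v] by auto
    moreover have "(X1 \<inter> copies G m v) \<inter> (X2 \<inter> copies G m v) = {}"
      using X by auto
    ultimately show ?thesis
      using card_Un_disjoint[of "X1 \<inter> copies G m v" "X2 \<inter> copies G m v"]
      by (simp add: finite_copies card_copies[OF that])
  qed
  define Y where "Y = {v \<in> verts G. m v < 2 * ?c1 v}"
  have "contains (induced G Y) (Kg n) \<or> contains (induced G (verts G - Y)) (Kg n)"
    using arrows unfolding vertex_arrows_def
    by (metis (no_types, lifting) Diff_disjoint Diff_partition Y_def mem_Collect_eq subsetI)
  then show "contains (induced (blowup G m) X1) (Jg (Suc n)) \<or>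
             contains (induced (blowup G m) X2) (Jg (Suc n))"
  proof
    assume "contains (induced G Y) (Kg n)"
    moreover have "1 \<le> ?c1 v" if "v \<in> verts G \<inter> Y" for v
      using that by (simp add: Y_def)
    moreover have "2 \<le> ?c1 v" if "v \<in> verts G \<inter> Y - B" for v
    proof -
      have "3 \<le> m v" "m v < 2 * ?c1 v"
        using that triple by (auto simp: Y_def)
      then show ?thesis by linarith
    qed
    ultimately show ?thesis
      using free by (blast intro: contains_Jg_Suc_in_blowup_if_doubled_outside)
  next
    assume "contains (induced G (verts G - Y)) (Kg n)"
    moreover have "1 \<le> ?c2 v" if "v \<in> verts G \<inter> (verts G - Y)" for v
    proof -
      have "1 \<le> m v" "2 * ?c1 v \<le> m v" "?c1 v + ?c2 v = m v"
        using that pos split[of v] by (auto simp: Y_def)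
      then show ?thesis by linarith
    qed
    moreover have "2 \<le> ?c2 v" if "v \<in> verts G \<inter> (verts G - Y) - B" for v
    proof -
      have "3 \<le> m v" "2 * ?c1 v \<le> m v" "?c1 v + ?c2 v = m v"
        using that triple split[of v] by (auto simp: Y_def)
      then show ?thesis by linarith
    qed
    ultimately show ?thesis
      using free by (blast intro: contains_Jg_Suc_in_blowup_if_doubled_outside)
  qed
qed

definition folkman_graph :: "nat \<Rightarrow> graph \<Rightarrow> graph \<Rightarrow> graph \<Rightarrow> bool" where
  "folkman_graph k H1 H2 G \<longleftrightarrow>
     simple_graph G \<and> \<not> contains G (Kg k) \<and> vertex_arrows G H1 H2"

lemma Fv_eq_Least_folkman_graph:
  "Fv H1 H2 k = (LEAST n. \<exists>G. folkman_graph k H1 H2 G \<and> card (verts G) = n)"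
  unfolding Fv_def folkman_graph_def by (intro arg_cong[where f = Least] ext) blast

lemma Fv_le_card: "folkman_graph k H1 H2 G \<Longrightarrow> Fv H1 H2 k \<le> card (verts G)"
  unfolding Fv_eq_Least_folkman_graph by (blast intro: Least_le)

lemma Fv_attained:
  assumes "\<exists>G. folkman_graph k H1 H2 G"
  obtains G where "folkman_graph k H1 H2 G" "card (verts G) = Fv H1 H2 k"
  using LeastI_ex[of "\<lambda>n. \<exists>G. folkman_graph k H1 H2 G \<and> card (verts G) = n"] assms
  unfolding Fv_eq_Least_folkman_graph by blast

lemma Fv_undefined:
  "\<nexists>G. folkman_graph k H1 H2 G \<Longrightarrow> Fv H1 H2 k = (LEAST n. False)"
  unfolding Fv_eq_Least_folkman_graph by simp

lemma folkman_graph_blowup: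
  assumes "folkman_graph k (Kg n) (Kg n) G" "\<not> contains (induced G B) (Kg n)"
    "\<forall>v\<in>verts G. 1 \<le> m v" "\<forall>v\<in>verts G - B. 3 \<le> m v"
  shows "folkman_graph k (Jg (Suc n)) (Jg (Suc n)) (blowup G m)"
proof -
  have G: "simple_graph G" "\<not> contains G (Kg k)" "vertex_arrows G (Kg n) (Kg n)"
    using assms(1) by (simp_all add: folkman_graph_def)
  then show ?thesis
    unfolding folkman_graph_def
    using simple_graph_blowup contains_Kg_blowupD vertex_arrows_blowup[OF G(3) assms(2-4)]
    by blast
qed

lemma Fv_minimal_graph_partition:
  assumes G: "folkman_graph k H1 H2 G" "card (verts G) = Fv H1 H2 k" and v: "v \<in> verts G"
  obtains X1 X2 where "X1 \<union> X2 = verts G - {v}" "X1 \<inter> X2 = {}"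
    "\<not> contains (induced G X1) H1" "\<not> contains (induced G X2) H2"
proof -
  let ?G' = "induced G (verts G - {v})"
  have fin: "finite (verts G)"
    using G(1) by (simp add: folkman_graph_def simple_graph_def)
  have verts_G': "verts ?G' = verts G - {v}"
    by auto
  then have "card (verts ?G') < Fv H1 H2 k"
    using card_Diff1_less[OF fin v] G(2) by simp
  then have "\<not> folkman_graph k H1 H2 ?G'"
    using Fv_le_card by (meson not_le)
  then have "\<not> vertex_arrows ?G' H1 H2"
    using G(1) simple_graph_induced contains_induced_imp_contains
    unfolding folkman_graph_def by blast
  then obtain X1 X2 where X: "X1 \<union> X2 = verts G - {v}" "X1 \<inter> X2 = {}"
    "\<not> contains (induced ?G' X1) H1" "\<not> contains (induced ?G' X2) H2"
    unfolding vertex_arrows_def verts_G' by blast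
  moreover have "induced ?G' X1 = induced G X1" "induced ?G' X2 = induced G X2"
    using X(1) by (auto intro: induced_induced)
  ultimately show thesis
    using that by simp
qed

lemma Fv_Jg_Suc_le:
  assumes "\<exists>G. folkman_graph k (Kg (Suc n)) (Kg (Suc n)) G"
  shows "2 * Fv (Jg (Suc (Suc n))) (Jg (Suc (Suc n))) k \<le> 5 * Fv (Kg (Suc n)) (Kg (Suc n)) k + 1"
proof -
  let ?K = "Kg (Suc n)" and ?F = "Fv (Kg (Suc n)) (Kg (Suc n)) k"
  obtain G where G: "folkman_graph k ?K ?K G" "card (verts G) = ?F"
    using assms by (rule Fv_attained)
  have fin: "finite (verts G)"
    using G(1) by (simp add: folkman_graph_def simple_graph_def)
  have "verts G \<noteq> {}"
  proof
    assume "verts G = {}"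
    with G(1) show False
      unfolding folkman_graph_def vertex_arrows_def by (simp add: not_contains_if_empty)
  qed
  then obtain v where v: "v \<in> verts G" by blast
  obtain X1 X2 where X: "X1 \<union> X2 = verts G - {v}" "X1 \<inter> X2 = {}"
    "\<not> contains (induced G X1) ?K" "\<not> contains (induced G X2) ?K"
    using G v by (rule Fv_minimal_graph_partition)
  define B where "B = (if card X2 \<le> card X1 then X1 else X2)"
  have B: "B \<subseteq> verts G" "\<not> contains (induced G B) ?K"
    using X by (auto simp: B_def)
  have "card X1 + card X2 = ?F - 1"
  proof -
    have "finite X1" "finite X2"
      using X(1) fin by (metis finite_Diff finite_Un)+
    then have "card X1 + card X2 = card (verts G - {v})"
      using X(1,2) by (simp add: card_Un_disjoint[symmetric])
    then show ?thesis
      using fin v G(2) by simp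
  qed
  then have large: "?F \<le> 2 * card B + 1"
    using v fin G(2) card_gt_0_iff[of "verts G"] by (auto simp: B_def)
  define m :: "nat \<Rightarrow> nat" where "m v = (if v \<in> B then 2 else 3)" for v
  have "folkman_graph k (Jg (Suc (Suc n))) (Jg (Suc (Suc n))) (blowup G m)"
    using G(1) B(2) by (intro folkman_graph_blowup) (auto simp: m_def)
  then have "Fv (Jg (Suc (Suc n))) (Jg (Suc (Suc n))) k \<le> (\<Sum>v\<in>verts G. m v)"
    using Fv_le_card card_blowup_verts[OF fin] by (metis verts_blowup)
  also have "(\<Sum>v\<in>verts G. m v) = 2 * card B + 3 * (?F - card B)"
    using sum.subset_diff[OF B(1) fin, of m] fin B(1) G(2)
    by (simp add: m_def card_Diff_subset finite_subset)
  finally show ?thesis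
    using large card_mono[OF fin B(1)] G(2) by linarith
qed

theorem mainTheorem7:
  fixes k :: nat
  assumes "k \<ge> 3"
  shows "Fv (Jg k) (Jg k) k \<le> nat \<lceil>5 * real (Fv (Kg (k - 1)) (Kg (k - 1)) k) / 2\<rceil>"
proof -
  define n where "n = k - 2"
  have k: "k = Suc (Suc n)"
    using assms by (simp add: n_def)
  let ?FJ = "Fv (Jg k) (Jg k) k" and ?FK = "Fv (Kg (k - 1)) (Kg (k - 1)) k"
  have "2 * ?FJ \<le> 5 * ?FK + 1"
  proof (cases "\<exists>G. folkman_graph k (Kg (k - 1)) (Kg (k - 1)) G")
    case True
    then show ?thesis
      using Fv_Jg_Suc_le[of k n] by (simp add: k)
  next
    case False
    \<comment> \<open>then neither Folkman number exists and both equal the junk value LEAST n. False\<close>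
    moreover have "\<not> folkman_graph k (Jg k) (Jg k) G" for G
      using False[unfolded not_ex, rule_format, of G]
        vertex_arrows_mono[OF _ Jg_Suc_contains_Kg Jg_Suc_contains_Kg, of G "k - 1" "k - 1"]
      unfolding folkman_graph_def by (simp add: k) blast
    ultimately show ?thesis
      by (simp add: Fv_undefined)
  qed
  then have "real ?FJ \<le> 5 * real ?FK / 2 + 1 / 2"
    by linarith
  then show ?thesis
    by (simp add: le_nat_iff le_ceiling_iff)
qed

end
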